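(* For proposition letters $p,o,r,q$, the formula $\mathcal{K}hm(p,o,r)\wedge\mathcal{K}hm(r,o,q)\wedge\mathcal{U}(r\to o)\to\mathcal{K}hm(p,o,q)$ is valid, i.e., true at every state of every model.
   Context: Fix a countable set of proposition letters $\mathbf{P}$ and a countable non-empty set of action symbols $\Sigma$. Formulas: $\phi ::= p \mid \neg\phi \mid (\phi\wedge\phi) \mid \mathcal{K}hm(\phi,\phi,\phi)$; $\top,\bot,\to$ as usual; $\mathcal{U}\phi$ abbreviates $\mathcal{K}hm(\neg\phi,\top,\bot)$. A model is $(S,\mathcal{R},\mathcal{V})$ with $S\neq\emptyset$, $\mathcal{R}:\Sigma\to 2^{S\times S}$, $\mathcal{V}:S\to 2^{\mathbf{P}}$. For $\sigma=a_1\cdots a_n\in\Sigma^*$, $s\xrightarrow{\sigma}t$ means there is a path $s\xrightarrow{a_1}\cdots\xrightarrow{a_n}t$ ($s\xrightarrow{\epsilon}s$ for the empty sequence); $\sigma_k=a_1\cdots a_k$, $\sigma_0=\epsilon$. $\sigma$ is strongly $\chi$-executable at $s'$ if for each $0\le k<n$, every $t$ with $s'\xrightarrow{\sigma_k}t$ has an $a_{k+1}$-successor, and every $t$ with $s'\xrightarrow{\sigma_k}t$ for $0<k<n$ satisfies $\chi$. $\mathcal{M},s\vDash\mathcal{K}hm(\psi,\chi,\phi)$ iff there is $\sigma\in\Sigma^*$ such that for every $s'$ with $\mathcal{M},s'\vDash\psi$, $\sigma$ is strongly $\chi$-executable at $s'$ and $\mathcal{M},t\vDash\phi$ for all $t$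 with $s'\xrightarrow{\sigma}t$; atoms and Booleans are interpreted as usual ($\mathcal{M},s\vDash p$ iff $p\in\mathcal{V}(s)$). Consequently $\mathcal{M},s\vDash\mathcal{U}\phi$ iff $\phi$ holds at all states of $\mathcal{M}$. *)

theory Defs
  imports Main "HOL-Library.Countable"
begin

datatype 'p form =
    Prop 'p
  | Neg "'p form"
  | Conj "'p form" "'p form"
  | Khm "'p form" "'p form" "'p form"

text \<open>Derived connectives. Top is any tautology; we use a fixed (arbitrary) letter.\<close>
definition Top :: "'p form" where
  "Top = Neg (Conj (Prop undefined) (Neg (Prop undefined)))"
definition Bot :: "'p form" where "Bot = Neg Top"
definition Disj :: "'p form \<Rightarrow> 'p form \<Rightarrow> 'p form" where
  "Disj a b = Neg (Conj (Neg a) (Neg b))"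
definition Imp :: "'p form \<Rightarrow> 'p form \<Rightarrow> 'p form" where
  "Imp a b = Neg (Conj a (Neg b))"
definition Univ :: "'p form \<Rightarrow> 'p form" where
  "Univ a = Khm (Neg a) Top Bot"

record ('s, 'a, 'p) model =
  St :: "'s set"
  Rel :: "'a \<Rightarrow> ('s \<times> 's) set"
  Val :: "'s \<Rightarrow> 'p set"

definition is_model :: "('s, 'a, 'p) model \<Rightarrow> bool" where
  "is_model M \<longleftrightarrow> St M \<noteq> {} \<and> (\<forall>a. Rel M a \<subseteq> St M \<times> St M)"

fun reach :: "('s, 'a, 'p) model \<Rightarrow> 'a list \<Rightarrow> 's \<Rightarrow> 's \<Rightarrow> bool" where
  "reach M [] s t \<longleftrightarrow> s = t"
| "reach M (a # \<sigma>) s t \<longleftrightarrow> (\<exists>u. (s, u) \<in> Rel M a \<and> reach M \<sigma> u t)"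

text \<open>sigma strongly chi-executable at s' (chi given as the set of states satisfying it).\<close>
definition strongly_exec :: "('s, 'a, 'p) model \<Rightarrow> 's set \<Rightarrow> 'a list \<Rightarrow> 's \<Rightarrow> bool" where
  "strongly_exec M X \<sigma> s' \<longleftrightarrow>
     (\<forall>k < length \<sigma>. \<forall>t. reach M (take k \<sigma>) s' t \<longrightarrow>
        (\<exists>u. (t, u) \<in> Rel M (\<sigma> ! k)) \<and> (0 < k \<longrightarrow> t \<in> X))"

fun sat :: "('s, 'a, 'p) model \<Rightarrow> 's \<Rightarrow> 'p form \<Rightarrow> bool" where
  "sat M s (Prop p) \<longleftrightarrow> p \<in> Val M s"
| "sat M s (Neg \<phi>) \<longleftrightarrow> \<not> sat M s \<phi>"
| "sat M s (Conj \<phi> \<psi>) \<longleftrightarrow> sat M s \<phi> \<and> sat M s \<psi>"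
| "sat M s (Khm \<psi> \<chi> \<phi>) \<longleftrightarrow>
     (\<exists>\<sigma>::'a list. \<forall>s' \<in> St M. sat M s' \<psi> \<longrightarrow>
        strongly_exec M {t \<in> St M. sat M t \<chi>} \<sigma> s' \<and>
        (\<forall>t. reach M \<sigma> s' t \<longrightarrow> sat M t \<phi>))"

end

theory Submission
  imports Defs
begin

text \<open>If \<open>\<sigma>\<^sub>1\<close> is a strongly \<open>\<chi>\<close>-executable plan from \<open>p\<close> to \<open>r\<close> and \<open>\<sigma>\<^sub>2\<close> one from \<open>r\<close>
  to \<open>q\<close>, then \<open>\<sigma>\<^sub>1 \<sigma>\<^sub>2\<close> is one from \<open>p\<close> to \<open>q\<close>: the only new intermediate states are the
  endpoints of \<open>\<sigma>\<^sub>1\<close>, which satisfy \<open>r\<close> and hence \<open>\<chi>\<close> because \<open>\<U>(r \<rightarrow> \<chi>)\<close> holds.\<close>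

lemma reach_append:
  "reach M (\<sigma>\<^sub>1 @ \<sigma>\<^sub>2) s t \<longleftrightarrow> (\<exists>u. reach M \<sigma>\<^sub>1 s u \<and> reach M \<sigma>\<^sub>2 u t)"
  by (induction \<sigma>\<^sub>1 arbitrary: s) auto

lemma reach_in_St:
  assumes "is_model M" "s \<in> St M" "reach M \<sigma> s t"
  shows "t \<in> St M"
  using assms(2,3) by (induction \<sigma> arbitrary: s) (use assms(1) in \<open>auto simp: is_model_def\<close>)

lemma strongly_exec_reach_take:
  assumes "strongly_exec M X \<sigma> s" "k \<le> length \<sigma>"
  shows "\<exists>t. reach M (take k \<sigma>) s t"
  using assms(2)
proof (induction k)
  case 0
  then show ?case by simp
next
  case (Suc k)
  then obtain t where t: "reach M (take k \<sigma>) s t" by auto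
  have k: "k < length \<sigma>" using Suc.prems by simp
  then obtain u where "(t, u) \<in> Rel M (\<sigma> ! k)"
    using assms(1) t unfolding strongly_exec_def by blast
  with t k show ?case by (auto simp: take_Suc_conv_app_nth reach_append)
qed

lemma strongly_exec_reach: "strongly_exec M X \<sigma> s \<Longrightarrow> \<exists>t. reach M \<sigma> s t"
  using strongly_exec_reach_take[of M X \<sigma> s "length \<sigma>"] by simp

lemma strongly_exec_append:
  assumes exec\<^sub>1: "strongly_exec M X \<sigma>\<^sub>1 s"
    and exec\<^sub>2: "\<And>u. reach M \<sigma>\<^sub>1 s u \<Longrightarrow> u \<in> X \<and> strongly_exec M X \<sigma>\<^sub>2 u"
  shows "strongly_exec M X (\<sigma>\<^sub>1 @ \<sigma>\<^sub>2) s"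
  unfolding strongly_exec_def
proof (intro allI impI)
  fix k t
  assume k: "k < length (\<sigma>\<^sub>1 @ \<sigma>\<^sub>2)" and t: "reach M (take k (\<sigma>\<^sub>1 @ \<sigma>\<^sub>2)) s t"
  show "(\<exists>v. (t, v) \<in> Rel M ((\<sigma>\<^sub>1 @ \<sigma>\<^sub>2) ! k)) \<and> (0 < k \<longrightarrow> t \<in> X)"
  proof (cases "k < length \<sigma>\<^sub>1")
    case True
    with exec\<^sub>1 t show ?thesis unfolding strongly_exec_def by (auto simp: nth_append)
  next
    case False
    define j where "j = k - length \<sigma>\<^sub>1"
    have kj: "k = length \<sigma>\<^sub>1 + j" "j < length \<sigma>\<^sub>2" using False k by (auto simp: j_def)
    then obtain u where u: "reach M \<sigma>\<^sub>1 s u" and ut: "reach M (take j \<sigma>\<^sub>2) u t"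
      using t by (auto simp: reach_append)
    have "u \<in> X" "strongly_exec M X \<sigma>\<^sub>2 u" using exec\<^sub>2[OF u] by auto
    with ut kj show ?thesis
      unfolding strongly_exec_def by (cases "j = 0") (auto simp: nth_append)
  qed
qed

lemma sat_Top [simp]: "sat M s Top"
  by (simp add: Top_def)

lemma sat_Bot [simp]: "\<not> sat M s Bot"
  by (simp add: Bot_def)

lemma sat_Imp [simp]: "sat M s (Imp \<phi> \<psi>) \<longleftrightarrow> (sat M s \<phi> \<longrightarrow> sat M s \<psi>)"
  by (simp add: Imp_def)

lemma sat_Univ: "sat M s (Univ \<phi>) \<longleftrightarrow> (\<forall>t \<in> St M. sat M t \<phi>)"
proof
  assume "sat M s (Univ \<phi>)"
  then obtain \<sigma> where \<sigma>: "\<forall>t \<in> St M. sat M t (Neg \<phi>) \<longrightarrow>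
      strongly_exec M {t \<in> St M. sat M t Top} \<sigma> t \<and> (\<forall>u. reach M \<sigma> t u \<longrightarrow> sat M u Bot)"
    unfolding Univ_def sat.simps(4) by blast
  show "\<forall>t \<in> St M. sat M t \<phi>"
    using \<sigma> strongly_exec_reach by fastforce
next
  assume "\<forall>t \<in> St M. sat M t \<phi>"
  then show "sat M s (Univ \<phi>)"
    unfolding Univ_def sat.simps(4) by (intro exI[of _ "[]"]) (simp add: strongly_exec_def)
qed

lemma sat_Khm_trans:
  assumes M: "is_model M"
    and K\<^sub>1: "sat M s (Khm \<psi> \<chi> \<phi>)" and K\<^sub>2: "sat M s (Khm \<phi> \<chi> \<theta>)"
    and \<phi>\<chi>: "\<forall>t \<in> St M. sat M t \<phi> \<longrightarrow> sat M t \<chi>"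
  shows "sat M s (Khm \<psi> \<chi> \<theta>)"
proof -
  let ?X = "{t \<in> St M. sat M t \<chi>}"
  obtain \<sigma>\<^sub>1 where \<sigma>\<^sub>1: "\<forall>s' \<in> St M. sat M s' \<psi> \<longrightarrow>
      strongly_exec M ?X \<sigma>\<^sub>1 s' \<and> (\<forall>t. reach M \<sigma>\<^sub>1 s' t \<longrightarrow> sat M t \<phi>)"
    using K\<^sub>1 by auto
  obtain \<sigma>\<^sub>2 where \<sigma>\<^sub>2: "\<forall>s' \<in> St M. sat M s' \<phi> \<longrightarrow>
      strongly_exec M ?X \<sigma>\<^sub>2 s' \<and> (\<forall>t. reach M \<sigma>\<^sub>2 s' t \<longrightarrow> sat M t \<theta>)"
    using K\<^sub>2 by auto
  have "strongly_exec M ?X (\<sigma>\<^sub>1 @ \<sigma>\<^sub>2) s' \<and> (\<forall>t. reach M (\<sigma>\<^sub>1 @ \<sigma>\<^sub>2) s' t \<longrightarrow> sat M t \<theta>)"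
    if s': "s' \<in> St M" "sat M s' \<psi>" for s'
  proof -
    have mid: "u \<in> St M \<and> sat M u \<phi>" if "reach M \<sigma>\<^sub>1 s' u" for u
      using \<sigma>\<^sub>1 s' that reach_in_St[OF M s'(1)] by blast
    have "strongly_exec M ?X (\<sigma>\<^sub>1 @ \<sigma>\<^sub>2) s'"
    proof (rule strongly_exec_append)
      show "strongly_exec M ?X \<sigma>\<^sub>1 s'" using \<sigma>\<^sub>1 s' by blast
      show "u \<in> ?X \<and> strongly_exec M ?X \<sigma>\<^sub>2 u" if "reach M \<sigma>\<^sub>1 s' u" for u
        using mid[OF that] \<sigma>\<^sub>2 \<phi>\<chi> by blast
    qed
    moreover have "\<forall>t. reach M (\<sigma>\<^sub>1 @ \<sigma>\<^sub>2) s' t \<longrightarrow> sat M t \<theta>"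
      using \<sigma>\<^sub>2 mid by (auto simp: reach_append)
    ultimately show ?thesis ..
  qed
  then show ?thesis unfolding sat.simps(4) by blast
qed

theorem mainTheorem4:
  fixes p o' r q :: "'p::countable"
  shows "\<forall>M :: ('s, 'a::countable, 'p) model. is_model M \<longrightarrow>
           (\<forall>s \<in> St M. sat M s
              (Imp (Conj (Conj (Khm (Prop p) (Prop o') (Prop r))
                               (Khm (Prop r) (Prop o') (Prop q)))
                         (Univ (Imp (Prop r) (Prop o'))))
                   (Khm (Prop p) (Prop o') (Prop q))))"
proof (intro allI impI ballI)
  fix M :: "('s, 'a, 'p) model" and s
  assume "is_model M"
  then show "sat M s (Imp (Conj (Conj (Khm (Prop p) (Prop o') (Prop r))
                                     (Khm (Prop r) (Prop o') (Prop q)))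
                               (Univ (Imp (Prop r) (Prop o'))))
                         (Khm (Prop p) (Prop o') (Prop q)))"
    unfolding sat_Imp sat.simps(3) sat_Univ by (blast intro: sat_Khm_trans)
qed

end
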